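(* There is no kernel on $\mathbf{R}$ that is shiftable. That is, there is no function $\varphi:\mathbf{R}\to\mathbf{R}$ which is simultaneously (i) a kernel on the entire real line and (ii) shiftable on $\mathbf{R}$.
   Context: A function $\varphi:\mathbf{R}\to\mathbf{R}$ is called shiftable if there exist finitely many fixed functions $\varphi_1,\ldots,\varphi_N:\mathbf{R}\to\mathbf{R}$ such that for every $\tau\in\mathbf{R}$ there are coefficients $c_1(\tau),\ldots,c_N(\tau)\in\mathbf{R}$ with $\varphi(x-\tau)=c_1(\tau)\varphi_1(x)+\cdots+c_N(\tau)\varphi_N(x)$ for all $x\in\mathbf{R}$. A kernel is a smooth function $\varphi:\mathbf{R}\to\mathbf{R}$ that is symmetric ($\varphi(-x)=\varphi(x)$ for all $x$), non-negative ($\varphi(x)\ge 0$ for all $x$), and unimodal with peak at the origin, meaning $\varphi$ is strictly increasing on $(-\infty,0]$ and strictly decreasing on $[0,\infty)$. *)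

theory Defs
  imports "HOL-Analysis.Analysis"
begin

definition smooth_real :: "(real \<Rightarrow> real) \<Rightarrow> bool" where
  "smooth_real f \<longleftrightarrow> (\<forall>n x. (deriv ^^ n) f differentiable (at x))"

definition shiftable :: "(real \<Rightarrow> real) \<Rightarrow> bool" where
  "shiftable \<phi> \<longleftrightarrow>
     (\<exists>(N::nat) (\<phi>s :: nat \<Rightarrow> real \<Rightarrow> real).
        \<forall>\<tau>::real. \<exists>c :: nat \<Rightarrow> real.
          \<forall>x::real. \<phi> (x - \<tau>) = (\<Sum>i<N. c i * \<phi>s i x))"

definition is_kernel :: "(real \<Rightarrow> real) \<Rightarrow> bool" where
  "is_kernel \<phi> \<longleftrightarrow> smooth_real \<phi>
     \<and> (\<forall>x. \<phi> (-x) = \<phi> x)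
     \<and> (\<forall>x. \<phi> x \<ge> 0)
     \<and> strict_mono_on {..0} \<phi>
     \<and> strict_antimono_on {0..} \<phi>"

end

theory Submission
  imports Defs "HOL-Library.Function_Algebras"
begin

text \<open>
  If \<open>\<phi>\<close> were shiftable with \<open>N\<close> functions, the \<open>N + 1\<close> translates \<open>\<phi> (x - k T)\<close>
  would satisfy a nontrivial linear relation \<open>\<Sum>\<^sub>k l\<^sub>k \<phi> (x - k T) = 0\<close>. Let \<open>L\<close> be the
  infimum of \<open>\<phi>\<close> and \<open>a = \<phi> 0 - L > 0\<close>. For \<open>T\<close> large, \<open>\<phi>\<close> is within \<open>e\<close> of \<open>L\<close>
  outside \<open>(-T, T)\<close>, so evaluating the relation at the points \<open>j T\<close> gives a linear system
  whose matrix is \<open>L\<close> times the all-ones matrix plus \<open>a\<close> times the identity, up to entries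
  of size \<open>e\<close>; evaluating it at \<open>-T\<close>, far from all centres, shows that the rank-one part
  contributes at most \<open>e \<Sum>\<^sub>k \<bar>l\<^sub>k\<bar>\<close>. Hence \<open>a \<bar>l\<^sub>j\<bar> \<le> 2 e \<Sum>\<^sub>k \<bar>l\<^sub>k\<bar>\<close> for every \<open>j\<close>,
  which forces \<open>l = 0\<close> once \<open>2 (N + 1) e < a\<close>.
\<close>

interpretation fun_space: vector_space "\<lambda>(r::real) (f::'a \<Rightarrow> real) x. r * f x"
  by unfold_locales (auto simp: fun_eq_iff algebra_simps)

lemma sum_fun_apply: "(\<Sum>i\<in>A. f i) x = (\<Sum>i\<in>A. f i x :: 'b::comm_monoid_add)"
  by (induction A rule: infinite_finite_induct) auto

lemma dependent_image_nontrivial_relation: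
  fixes f :: "nat \<Rightarrow> 'a \<Rightarrow> real"
  assumes "fun_space.dependent (f ` {..<n})" and "inj_on f {..<n}"
  shows "\<exists>l. (\<exists>k<n. l k \<noteq> 0) \<and> (\<forall>x. (\<Sum>k<n. l k * f k x) = 0)"
proof -
  obtain t u where t: "finite t" "t \<subseteq> f ` {..<n}"
    and relation: "(\<Sum>v\<in>t. (\<lambda>x. u v * v x)) = 0" and nontrivial: "\<exists>v\<in>t. u v \<noteq> 0"
    using assms(1) unfolding fun_space.dependent_explicit by blast
  define l where "l k = (if f k \<in> t then u (f k) else 0)" for k
  define K where "K = {k \<in> {..<n}. f k \<in> t}"
  have "inj_on f K" "f ` K = t"
    using assms(2) t unfolding K_def by (auto intro: inj_on_subset)
  have "(\<Sum>k<n. l k * f k x) = 0" for x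
  proof -
    have "(\<Sum>k<n. l k * f k x) = (\<Sum>k\<in>K. u (f k) * f k x)"
      unfolding K_def sum.inter_filter[OF finite_lessThan] by (rule sum.cong) (simp_all add: l_def)
    also have "\<dots> = (\<Sum>v\<in>t. u v * v x)"
      using sum.reindex[OF \<open>inj_on f K\<close>, of "\<lambda>v. u v * v x"] \<open>f ` K = t\<close> by simp
    also have "\<dots> = 0"
      using fun_cong[OF relation, of x] by (simp add: sum_fun_apply)
    finally show ?thesis .
  qed
  moreover obtain v where "v \<in> t" "u v \<noteq> 0"
    using nontrivial by blast
  then obtain k where "k < n" "l k \<noteq> 0"
    using t unfolding l_def by auto
  ultimately show ?thesis
    by blast
qed

lemma finite_span_functions_dependent:
  fixes f :: "nat \<Rightarrow> 'a \<Rightarrow> real" and b :: "nat \<Rightarrow> 'a \<Rightarrow> real"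
  assumes span: "\<And>k. k < n \<Longrightarrow> \<exists>c. \<forall>x. f k x = (\<Sum>i<N. c i * b i x)" and "N < n"
  shows "\<exists>l. (\<exists>k<n. l k \<noteq> 0) \<and> (\<forall>x. (\<Sum>k<n. l k * f k x) = 0)"
proof (cases "inj_on f {..<n}")
  case True
  have "f k \<in> fun_space.span (b ` {..<N})" if "k < n" for k
  proof -
    from span[OF \<open>k < n\<close>] obtain c where "\<And>x. f k x = (\<Sum>i<N. c i * b i x)"
      by blast
    then have "f k = (\<Sum>i<N. (\<lambda>x. c i * b i x))"
      by (simp add: fun_eq_iff sum_fun_apply)
    also have "\<dots> \<in> fun_space.span (b ` {..<N})"
      by (intro fun_space.span_sum fun_space.span_scale fun_space.span_base) auto
    finally show ?thesis .
  qed
  then have "f ` {..<n} \<subseteq> fun_space.span (b ` {..<N})"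
    by auto
  then have "card (f ` {..<n}) \<le> card (b ` {..<N})"
    if "fun_space.independent (f ` {..<n})"
    using fun_space.independent_span_bound[OF finite_imageI[OF finite_lessThan] that] by simp
  moreover have "card (b ` {..<N}) < card (f ` {..<n})"
    using card_image_le[of "{..<N}" b] card_image[OF True] \<open>N < n\<close> by simp
  ultimately show ?thesis
    using dependent_image_nontrivial_relation[OF _ True] by fastforce
next
  case False
  then obtain j k where jk: "j < n" "k < n" "j \<noteq> k" "f j = f k"
    unfolding inj_on_def by blast
  define l :: "nat \<Rightarrow> real" where "l i = of_bool (i = j) - of_bool (i = k)" for i
  have "(\<Sum>i<n. l i * f i x) = 0" for x
  proof -
    have "(\<Sum>i<n. l i * f i x) = (\<Sum>i<n. (if i = j then f i x else 0) - (if i = k then f i x else 0))"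
      by (rule sum.cong) (auto simp: l_def)
    also have "\<dots> = f j x - f k x"
      using jk by (simp add: sum_subtractf)
    finally show ?thesis
      using jk by simp
  qed
  moreover have "l j \<noteq> 0"
    using jk by (simp add: l_def)
  ultimately show ?thesis
    using jk by blast
qed

lemma abs_sum_le_of_perturbed_relation:
  fixes l q c :: "'a \<Rightarrow> real"
  assumes relation: "(\<Sum>k\<in>A. l k * q k) = 0"
    and close: "\<And>k. k \<in> A \<Longrightarrow> \<bar>q k - c k\<bar> \<le> e"
  shows "\<bar>\<Sum>k\<in>A. l k * c k\<bar> \<le> e * (\<Sum>k\<in>A. \<bar>l k\<bar>)"
proof -
  have "(\<Sum>k\<in>A. l k * c k) = (\<Sum>k\<in>A. l k * q k) - (\<Sum>k\<in>A. l k * (q k - c k))"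
    unfolding sum_subtractf[symmetric] by (rule sum.cong) (simp_all add: algebra_simps)
  then have "\<bar>\<Sum>k\<in>A. l k * c k\<bar> = \<bar>\<Sum>k\<in>A. l k * (q k - c k)\<bar>"
    by (simp add: relation)
  also have "\<dots> \<le> (\<Sum>k\<in>A. \<bar>l k\<bar> * \<bar>q k - c k\<bar>)"
    unfolding abs_mult[symmetric] by (rule sum_abs)
  also have "\<dots> \<le> (\<Sum>k\<in>A. \<bar>l k\<bar> * e)"
    by (intro sum_mono mult_left_mono close) auto
  also have "\<dots> = e * (\<Sum>k\<in>A. \<bar>l k\<bar>)"
    by (simp add: sum_distrib_left mult.commute)
  finally show ?thesis .
qed
lemma near_diagonal_relation_trivial:
  fixes l r :: "nat \<Rightarrow> real" and p :: "nat \<Rightarrow> nat \<Rightarrow> real"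
  assumes rows: "\<And>j. j < n \<Longrightarrow> (\<Sum>k<n. l k * p j k) = 0"
    and rows_close: "\<And>j k. j < n \<Longrightarrow> k < n \<Longrightarrow> \<bar>p j k - (L + (if k = j then a else 0))\<bar> \<le> e"
    and far_row: "(\<Sum>k<n. l k * r k) = 0"
    and far_row_close: "\<And>k. k < n \<Longrightarrow> \<bar>r k - L\<bar> \<le> e"
    and small: "2 * real n * e < a"
  shows "\<forall>k<n. l k = 0"
proof -
  define M where "M = (\<Sum>k<n. \<bar>l k\<bar>)"
  have far_bound: "\<bar>L * (\<Sum>k<n. l k)\<bar> \<le> e * M"
    using abs_sum_le_of_perturbed_relation[OF far_row far_row_close]
    by (simp add: M_def sum_distrib_left mult.commute)
  have row_bound: "\<bar>a * l j\<bar> \<le> 2 * e * M" if "j < n" for j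
  proof -
    have "(\<Sum>k<n. l k * (L + (if k = j then a else 0)))
        = (\<Sum>k<n. L * l k + (if k = j then a * l k else 0))"
      by (rule sum.cong) (auto simp: algebra_simps)
    also have "\<dots> = L * (\<Sum>k<n. l k) + a * l j"
      using that by (simp add: sum.distrib sum_distrib_left)
    finally have "\<bar>L * (\<Sum>k<n. l k) + a * l j\<bar> \<le> e * M"
      using abs_sum_le_of_perturbed_relation[OF rows[OF that] rows_close[OF that]]
      by (simp add: M_def)
    with far_bound show ?thesis
      by linarith
  qed
  have "a * M \<le> (\<Sum>j<n. \<bar>a * l j\<bar>)"
    by (simp add: M_def abs_mult sum_distrib_left[symmetric] mult_right_mono sum_nonneg)
  also have "\<dots> \<le> (\<Sum>j<n. 2 * e * M)"
    by (intro sum_mono row_bound) simp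
  finally have "(a - 2 * real n * e) * M \<le> 0"
    by (simp add: algebra_simps)
  then have "M \<le> 0"
    using small by (simp add: mult_le_0_iff)
  then show ?thesis
    using sum_nonneg_eq_0_iff[of "{..<n}" "\<lambda>k. \<bar>l k\<bar>"] by (simp add: M_def eq_iff sum_nonneg)
qed

lemma even_antimono_tail_below_Inf:
  fixes \<phi> :: "real \<Rightarrow> real"
  assumes even: "\<And>x. \<phi> (-x) = \<phi> x" and decreasing: "antimono_on {0..} \<phi>"
    and bounded: "bdd_below (range \<phi>)" and "e > 0"
  obtains T where "T > 0" "\<And>z. T \<le> \<bar>z\<bar> \<Longrightarrow> \<phi> z < Inf (range \<phi>) + e"
proof -
  have phi_abs: "\<phi> \<bar>x\<bar> = \<phi> x" for x
    by (cases "x \<ge> 0") (simp_all add: even)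
  obtain y where y: "\<phi> y < Inf (range \<phi>) + e"
    using cInf_lessD[of "range \<phi>" "Inf (range \<phi>) + e"] \<open>e > 0\<close> by auto
  define T where "T = max \<bar>y\<bar> 1"
  have "\<phi> z < Inf (range \<phi>) + e" if "T \<le> \<bar>z\<bar>" for z
  proof -
    have "\<phi> \<bar>z\<bar> \<le> \<phi> \<bar>y\<bar>"
      using decreasing that by (auto simp: monotone_on_def T_def)
    with y show ?thesis
      by (simp add: phi_abs)
  qed
  moreover have "T > 0"
    by (simp add: T_def)
  ultimately show ?thesis
    using that by blast
qed

lemma separated_translates_independent:
  fixes \<phi> :: "real \<Rightarrow> real" and l :: "nat \<Rightarrow> real"
  assumes relation: "\<And>x. (\<Sum>k<n. l k * \<phi> (x - real k * T)) = 0"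
    and below: "\<And>x. L \<le> \<phi> x" and peak: "\<phi> 0 = L + a"
    and tail: "\<And>z. T \<le> \<bar>z\<bar> \<Longrightarrow> \<phi> z \<le> L + e"
    and "T > 0" and small: "2 * real n * e < a"
  shows "\<forall>k<n. l k = 0"
proof -
  have tail_close: "\<bar>\<phi> z - L\<bar> \<le> e" if "T \<le> \<bar>z\<bar>" for z
    using tail[OF that] below[of z] by simp
  show ?thesis
  proof (rule near_diagonal_relation_trivial[where p = "\<lambda>j k. \<phi> (real j * T - real k * T)"
        and r = "\<lambda>k. \<phi> (- T - real k * T)" and L = L and a = a and e = e])
    fix j k assume "j < n" "k < n"
    show "\<bar>\<phi> (real j * T - real k * T) - (L + (if k = j then a else 0))\<bar> \<le> e"
    proof (cases "k = j")
      case True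
      have "0 \<le> e"
        using tail_close[of T] \<open>T > 0\<close> by simp
      with True show ?thesis
        by (simp add: peak)
    next
      case False
      then have "T \<le> \<bar>real j - real k\<bar> * T"
        using \<open>T > 0\<close> by (simp add: mult_le_cancel_right1)
      also have "\<dots> = \<bar>real j * T - real k * T\<bar>"
        using \<open>T > 0\<close> by (metis abs_mult abs_of_pos left_diff_distrib)
      finally show ?thesis
        using False tail_close by simp
    qed
  next
    fix k assume "k < n"
    have "0 \<le> real k * T"
      using \<open>T > 0\<close> by simp
    then have "T \<le> \<bar>- T - real k * T\<bar>"
      by linarith
    then show "\<bar>\<phi> (- T - real k * T) - L\<bar> \<le> e"
      by (rule tail_close)
  qed (use relation small in simp_all)
qed

theorem even_strictly_decreasing_not_shiftable:
  fixes \<phi> :: "real \<Rightarrow> real"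
  assumes even: "\<And>x. \<phi> (-x) = \<phi> x" and decreasing: "strict_antimono_on {0..} \<phi>"
    and bounded: "bdd_below (range \<phi>)"
  shows "\<not> shiftable \<phi>"
proof
  assume "shiftable \<phi>"
  then obtain N and b :: "nat \<Rightarrow> real \<Rightarrow> real"
    where translates: "\<And>\<tau>. \<exists>c. \<forall>x. \<phi> (x - \<tau>) = (\<Sum>i<N. c i * b i x)"
    unfolding shiftable_def by blast
  define L where "L = Inf (range \<phi>)"
  define a where "a = \<phi> 0 - L"
  define n where "n = Suc N"
  define e where "e = a / (4 * real n)"
  have below: "L \<le> \<phi> x" for x
    unfolding L_def using bounded by (simp add: cInf_lower)
  have "\<phi> 1 < \<phi> 0"
    using decreasing by (auto simp: monotone_on_def)
  with below[of 1] have "a > 0"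
    by (simp add: a_def)
  moreover have "real n > 0"
    by (simp add: n_def)
  ultimately have "e > 0" and "2 * real n * e = a / 2"
    by (simp_all add: e_def)
  with \<open>a > 0\<close> have small: "2 * real n * e < a"
    by simp
  have "antimono_on {0..} \<phi>"
    using decreasing by (simp add: strict_antimono_iff_antimono)
  then obtain T where "T > 0" and tail: "\<And>z. T \<le> \<bar>z\<bar> \<Longrightarrow> \<phi> z < L + e"
    using even_antimono_tail_below_Inf[OF even _ bounded \<open>e > 0\<close>] unfolding L_def by blast
  obtain l where nontrivial: "\<exists>k<n. l k \<noteq> 0"
    and relation: "\<And>x. (\<Sum>k<n. l k * \<phi> (x - real k * T)) = 0"
    using finite_span_functions_dependent[where f = "\<lambda>k x. \<phi> (x - real k * T)"
        and n = n and N = N and b = b]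
      translates by (auto simp: n_def)
  have "\<forall>k<n. l k = 0"
    using separated_translates_independent[OF relation below _ _ \<open>T > 0\<close> small] tail
    by (simp add: a_def less_imp_le)
  with nontrivial show False
    by blast
qed

theorem mainTheorem1:
  shows "\<not> (\<exists>\<phi> :: real \<Rightarrow> real. is_kernel \<phi> \<and> shiftable \<phi>)"
proof
  assume "\<exists>\<phi> :: real \<Rightarrow> real. is_kernel \<phi> \<and> shiftable \<phi>"
  then obtain \<phi> :: "real \<Rightarrow> real" where "is_kernel \<phi>" and "shiftable \<phi>"
    by blast
  then have even: "\<And>x. \<phi> (-x) = \<phi> x" and decreasing: "strict_antimono_on {0..} \<phi>"
    and nonneg: "\<And>x. 0 \<le> \<phi> x"
    unfolding is_kernel_def by blast+
  from nonneg have "bdd_below (range \<phi>)"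
    by (auto intro: bdd_belowI[of _ 0])
  with even decreasing \<open>shiftable \<phi>\<close> show False
    using even_strictly_decreasing_not_shiftable by blast
qed

end
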